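(* Let $\mathcal{D}$ be a domain, $G$ a subgroup of $\mathrm{IET}(\mathcal{D})$, $(A,+)$ a finite abelian group, and $J\subset\mathcal{D}$ a subdomain. Let $\mathcal{F}=A^{\mathcal{D}}$ be the additive group of all functions $\mathcal{D}\to A$, on which $G$ acts by $g\cdot f=f\circ g^{-1}$. For $a\in A$ let $a\mathbb{1}_J\in\mathcal{F}$ be the function equal to $a$ on $J$ and $0$ elsewhere, and let $\mathcal{F}_J$ be the smallest $G$-invariant subgroup of $\mathcal{F}$ containing all $a\mathbb{1}_J$, $a\in A$. Then the semidirect product $\mathcal{F}_J\rtimes G$ embeds in $\mathrm{IET}$.
   Context: A domain is a non-empty disjoint union of finitely many oriented circles and oriented half-open bounded intervals closed on the left; a subdomain is a subset that is itself a domain. $\mathrm{IET}(\mathcal{D})$ is the group of bijections of $\mathcal{D}$ that are orientation-preserving piecewise isometries, left-continuous, with finitely many discontinuity points; $\mathrm{IET}=\mathrm{IET}([0,1))$. *)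

theory Defs
  imports Complex_Main "HOL-Algebra.Group"
begin

text \<open>A domain: components 0..<ncomp, component i is [0, len i) in coordinates,
  which is a circle of length len i if circ i holds, otherwise a half-open interval.
  Points are pairs (i, x).\<close>

record domain =
  ncomp :: nat
  len :: "nat \<Rightarrow> real"
  circ :: "nat \<Rightarrow> bool"

definition is_domain :: "domain \<Rightarrow> bool" where
  "is_domain D \<longleftrightarrow> ncomp D > 0 \<and> (\<forall>i < ncomp D. len D i > 0)"

definition pts :: "domain \<Rightarrow> (nat \<times> real) set" where
  "pts D = {(i, x). i < ncomp D \<and> 0 \<le> x \<and> x < len D i}"

definition wrap :: "domain \<Rightarrow> nat \<Rightarrow> real \<Rightarrow> real" where
  "wrap D j z = (if circ D j then z - len D j * of_int \<lfloor>z / len D j\<rfloor> else z)"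

text \<open>Elements of IET(D), normalised to be the identity off the domain:
  bijections of D which, off a finite set B of breakpoints, are given on every
  half-open coordinate interval [a,b) (containing no breakpoint in its interior)
  by an orientation-preserving isometry (translation/rotation) into one component.\<close>
definition IET_maps :: "domain \<Rightarrow> ((nat \<times> real) \<Rightarrow> (nat \<times> real)) set" where
  "IET_maps D = {f. bij_betw f (pts D) (pts D) \<and> (\<forall>p. p \<notin> pts D \<longrightarrow> f p = p) \<and>
     (\<exists>B. finite B \<and>
       (\<forall>i a b. i < ncomp D \<and> 0 \<le> a \<and> a < b \<and> b \<le> len D i \<and>
                (\<forall>y. a < y \<and> y < b \<longrightarrow> (i, y) \<notin> B) \<longrightarrow>
          (\<exists>j t. j < ncomp D \<and> (\<forall>y. a \<le> y \<and> y < b \<longrightarrow> f (i, y) = (j, wrap D j (y + t))))))}"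

definition IET_group :: "domain \<Rightarrow> ((nat \<times> real) \<Rightarrow> (nat \<times> real)) monoid" where
  "IET_group D = \<lparr>carrier = IET_maps D, mult = (\<circ>), one = id\<rparr>"

definition unit_interval :: domain where
  "unit_interval = \<lparr>ncomp = 1, len = (\<lambda>_. 1), circ = (\<lambda>_. False)\<rparr>"

definition IET :: "((nat \<times> real) \<Rightarrow> (nat \<times> real)) monoid" where
  "IET = IET_group unit_interval"

definition subdomain :: "domain \<Rightarrow> (nat \<times> real) set \<Rightarrow> bool" where
  "subdomain D J \<longleftrightarrow> J \<noteq> {} \<and>
     (\<exists>S. finite S \<and> (\<forall>(i, a, b) \<in> S. i < ncomp D \<and> 0 \<le> a \<and> a < b \<and> b \<le> len D i) \<and>
          J = (\<Union>(i, a, b) \<in> S. {(i, x) | x. a \<le> x \<and> x < b}))"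

text \<open>F = A^D, realised as functions vanishing off D.\<close>
definition Fun_grp :: "domain \<Rightarrow> ((nat \<times> real) \<Rightarrow> 'a::ab_group_add) set" where
  "Fun_grp D = {f. \<forall>p. p \<notin> pts D \<longrightarrow> f p = 0}"

definition ind_on :: "(nat \<times> real) set \<Rightarrow> 'a::ab_group_add \<Rightarrow> (nat \<times> real) \<Rightarrow> 'a" where
  "ind_on J a = (\<lambda>p. if p \<in> J then a else 0)"

definition act :: "((nat \<times> real) \<Rightarrow> (nat \<times> real)) \<Rightarrow> ((nat \<times> real) \<Rightarrow> 'a) \<Rightarrow> (nat \<times> real) \<Rightarrow> 'a" where
  "act g f = f \<circ> inv_into UNIV g"

definition F_J :: "domain \<Rightarrow> ((nat \<times> real) \<Rightarrow> (nat \<times> real)) set \<Rightarrow> (nat \<times> real) set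
                   \<Rightarrow> ((nat \<times> real) \<Rightarrow> 'a::ab_group_add) set" where
  "F_J D G J = \<Inter> {H. H \<subseteq> Fun_grp D \<and> (\<lambda>_. 0) \<in> H \<and>
                     (\<forall>f\<in>H. \<forall>h\<in>H. (\<lambda>p. f p + h p) \<in> H) \<and> (\<forall>f\<in>H. (\<lambda>p. - f p) \<in> H) \<and>
                     (\<forall>g\<in>G. \<forall>f\<in>H. act g f \<in> H) \<and> (\<forall>a. ind_on J a \<in> H)}"

definition semidirect :: "domain \<Rightarrow> ((nat \<times> real) \<Rightarrow> (nat \<times> real)) set \<Rightarrow> (nat \<times> real) set
     \<Rightarrow> (((nat \<times> real) \<Rightarrow> 'a::ab_group_add) \<times> ((nat \<times> real) \<Rightarrow> (nat \<times> real))) monoid" where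
  "semidirect D G J = \<lparr>carrier = F_J D G J \<times> G,
      mult = (\<lambda>(f, g) (f', g'). ((\<lambda>p. f p + act g f' p), g \<circ> g')),
      one = ((\<lambda>_. 0), id)\<rparr>"

end

theory Submission
  imports Defs
begin

text \<open>
  Encode \<open>(f, g)\<close> by the skew product \<open>(q, c) \<mapsto> (g q, c + f (g q))\<close> on \<open>\<D> \<times> A\<close>; composing
  skew products is exactly the multiplication of \<open>\<F>\<^sub>J \<rtimes> G\<close>, and the pair is recovered from
  the images of the points \<open>(q, 0)\<close>. Laying the \<open>|A|\<close> coloured copies of every component of
  \<open>\<D>\<close> end to end in \<open>[0, 1)\<close> turns the skew product into a bijection of \<open>[0, 1)\<close>. It is
  an interval exchange because \<open>g\<close> is a piecewise translation and \<open>f\<close> is a step function: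
  the step functions vanishing off \<open>\<D>\<close> form a \<open>G\<close>-invariant subgroup containing every
  \<open>a \<one>\<^sub>J\<close>, hence containing \<open>\<F>\<^sub>J\<close>. Composing with \<open>g\<^sup>-\<^sup>1\<close> requires \<open>IET(\<D>)\<close> to be closed
  under inverses, which is proved by showing that the inverse is locally a translation.
\<close>

definition cell :: "domain \<Rightarrow> nat \<Rightarrow> real \<Rightarrow> real \<Rightarrow> bool" where
  "cell D i a b \<longleftrightarrow> i < ncomp D \<and> 0 \<le> a \<and> a < b \<and> b \<le> len D i"

definition avoids :: "(nat \<times> real) set \<Rightarrow> nat \<Rightarrow> real \<Rightarrow> real \<Rightarrow> bool" where
  "avoids B i a b \<longleftrightarrow> (\<forall>y. a < y \<and> y < b \<longrightarrow> (i, y) \<notin> B)"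

definition translation_cuts :: "domain \<Rightarrow> ((nat \<times> real) \<Rightarrow> (nat \<times> real)) \<Rightarrow> (nat \<times> real) set \<Rightarrow> bool" where
  "translation_cuts D g B \<longleftrightarrow> finite B \<and> (\<forall>i a b. cell D i a b \<and> avoids B i a b \<longrightarrow>
     (\<exists>j t. j < ncomp D \<and> (\<forall>y. a \<le> y \<and> y < b \<longrightarrow> g (i, y) = (j, y + t))))"

definition step_cuts :: "domain \<Rightarrow> ((nat \<times> real) \<Rightarrow> 'a) \<Rightarrow> (nat \<times> real) set \<Rightarrow> bool" where
  "step_cuts D f B \<longleftrightarrow> finite B \<and> (\<forall>i a b. cell D i a b \<and> avoids B i a b \<longrightarrow>
     (\<forall>y. a \<le> y \<and> y < b \<longrightarrow> f (i, y) = f (i, a)))"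

definition step_function :: "domain \<Rightarrow> ((nat \<times> real) \<Rightarrow> 'a) \<Rightarrow> bool" where
  "step_function D f \<longleftrightarrow> (\<exists>B. step_cuts D f B)"

lemma cell_pts: "cell D i a b \<Longrightarrow> a \<le> y \<Longrightarrow> y < b \<Longrightarrow> (i, y) \<in> pts D"
  unfolding cell_def pts_def by simp

lemma avoids_mono: "avoids B i a b \<Longrightarrow> B' \<subseteq> B \<Longrightarrow> avoids B' i a b"
  unfolding avoids_def by blast

lemma translation_cutsD:
  assumes "translation_cuts D g B" "cell D i a b" "avoids B i a b"
  obtains j t where "j < ncomp D" "\<And>y. a \<le> y \<Longrightarrow> y < b \<Longrightarrow> g (i, y) = (j, y + t)"
  using assms unfolding translation_cuts_def by fastforce

lemma step_cutsD:
  assumes "step_cuts D f B" "cell D i a b" "avoids B i a b" "a \<le> y" "y < b"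
  shows "f (i, y) = f (i, a)"
  using assms unfolding step_cuts_def by blast

section \<open>Interval exchanges are piecewise translations\<close>

lemma wrap_eq_self:
  assumes "0 \<le> z" "z < len D j"
  shows "wrap D j z = z"
proof -
  have "0 \<le> z / len D j" "z / len D j < 1" using assms by auto
  then have "\<lfloor>z / len D j\<rfloor> = 0" by (simp add: floor_eq_iff)
  then show ?thesis by (simp add: wrap_def)
qed

lemma floor_eq_if_no_int_between:
  fixes u v :: real
  assumes "u \<le> v" and no_int: "\<And>z. z \<in> \<int> \<Longrightarrow> u < z \<Longrightarrow> z \<le> v \<Longrightarrow> False"
  shows "\<lfloor>v\<rfloor> = \<lfloor>u\<rfloor>"
proof (rule ccontr)
  assume "\<lfloor>v\<rfloor> \<noteq> \<lfloor>u\<rfloor>"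
  then have "\<lfloor>u\<rfloor> < \<lfloor>v\<rfloor>" using floor_mono[OF \<open>u \<le> v\<close>] by linarith
  then have "u < of_int \<lfloor>v\<rfloor>" by linarith
  then show False using no_int[of "of_int \<lfloor>v\<rfloor>"] by simp
qed

lemma IET_maps_bij_betw: "g \<in> IET_maps D \<Longrightarrow> bij_betw g (pts D) (pts D)"
  and IET_maps_fixes: "g \<in> IET_maps D \<Longrightarrow> p \<notin> pts D \<Longrightarrow> g p = p"
  unfolding IET_maps_def mem_Collect_eq by blast+

lemma IET_maps_pts_iff:
  assumes "g \<in> IET_maps D"
  shows "g p \<in> pts D \<longleftrightarrow> p \<in> pts D"
proof (cases "p \<in> pts D")
  case True
  then show ?thesis using bij_betwE[OF IET_maps_bij_betw[OF assms]] by blast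
next
  case False
  then show ?thesis using IET_maps_fixes[OF assms] by simp
qed

lemma IET_maps_bij:
  assumes "g \<in> IET_maps D"
  shows "bij g"
proof -
  have "bij_betw g (- pts D) (- pts D) \<longleftrightarrow> bij_betw id (- pts D) (- pts D)"
    by (rule bij_betw_cong) (simp add: IET_maps_fixes[OF assms])
  then have compl: "bij_betw g (- pts D) (- pts D)" by simp
  have "bij_betw g (pts D \<union> - pts D) (pts D \<union> - pts D)"
    by (rule bij_betw_combine[OF IET_maps_bij_betw[OF assms] compl]) simp
  then show ?thesis by (simp only: Compl_partition bij_def)
qed

lemma IET_maps_inv_pts_iff:
  assumes "g \<in> IET_maps D"
  shows "inv_into UNIV g p \<in> pts D \<longleftrightarrow> p \<in> pts D"
proof -
  have "g (inv_into UNIV g p) = p"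
    using bij_is_surj[OF IET_maps_bij[OF assms]] by (simp add: surj_f_inv_f)
  then show ?thesis using IET_maps_pts_iff[OF assms, of "inv_into UNIV g p"] by simp
qed

lemma IET_maps_iff:
  "g \<in> IET_maps D \<longleftrightarrow> bij_betw g (pts D) (pts D) \<and> (\<forall>p. p \<notin> pts D \<longrightarrow> g p = p) \<and>
     (\<exists>B. finite B \<and> (\<forall>i a b. cell D i a b \<and> avoids B i a b \<longrightarrow>
        (\<exists>j t. j < ncomp D \<and> (\<forall>y. a \<le> y \<and> y < b \<longrightarrow> g (i, y) = (j, wrap D j (y + t))))))"
  by (simp only: IET_maps_def cell_def avoids_def mem_Collect_eq conj_assoc)

lemma IET_maps_translation_cuts:
  assumes g: "g \<in> IET_maps D"
  obtains B where "translation_cuts D g B"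
proof -
  obtain B where fin: "finite B" and wrapped: "\<forall>i a b. cell D i a b \<and> avoids B i a b \<longrightarrow>
      (\<exists>j t. j < ncomp D \<and> (\<forall>y. a \<le> y \<and> y < b \<longrightarrow> g (i, y) = (j, wrap D j (y + t))))"
    using g unfolding IET_maps_iff by (elim conjE exE)
  txt \<open>Cutting also where \<open>g\<close> hits a left endpoint keeps a rotated piece from wrapping around.\<close>
  define Z where "Z = g -` ((\<lambda>j. (j, 0)) ` {..<ncomp D})"
  have "finite Z"
    unfolding Z_def using bij_is_inj[OF IET_maps_bij[OF g]] by (simp add: finite_vimageI)
  have "translation_cuts D g (B \<union> Z)"
    unfolding translation_cuts_def
  proof (intro conjI allI impI)
    show "finite (B \<union> Z)" using fin \<open>finite Z\<close> by simp
    fix i a b assume ab: "cell D i a b \<and> avoids (B \<union> Z) i a b"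
    then have "cell D i a b \<and> avoids B i a b" using avoids_mono[of "B \<union> Z" i a b B] by simp
    then obtain j t where j: "j < ncomp D"
      and jt: "\<And>y. a \<le> y \<Longrightarrow> y < b \<Longrightarrow> g (i, y) = (j, wrap D j (y + t))"
      using wrapped by meson
    show "\<exists>j t. j < ncomp D \<and> (\<forall>y. a \<le> y \<and> y < b \<longrightarrow> g (i, y) = (j, y + t))"
    proof (cases "circ D j")
      case False
      then show ?thesis using j jt unfolding wrap_def by (intro exI[of _ j] exI[of _ t]) simp
    next
      case True
      define L where "L = len D j"
      have a_in: "a \<le> a" "a < b" using ab unfolding cell_def by auto
      have "g (i, a) \<in> pts D" using IET_maps_pts_iff[OF g] cell_pts[OF _ a_in] ab by blast
      then have "L > 0" using jt[OF a_in] unfolding pts_def L_def by auto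
      have same_floor: "\<lfloor>(y + t) / L\<rfloor> = \<lfloor>(a + t) / L\<rfloor>" if y: "a \<le> y" "y < b" for y
      proof (rule floor_eq_if_no_int_between)
        show "(a + t) / L \<le> (y + t) / L" using y \<open>L > 0\<close> by (simp add: divide_right_mono)
      next
        fix z :: real assume z: "z \<in> \<int>" "(a + t) / L < z" "z \<le> (y + t) / L"
        define y1 where "y1 = z * L - t"
        have y1: "a < y1" "y1 < b" using z y \<open>L > 0\<close> unfolding y1_def by (auto simp: field_simps)
        obtain k where k: "z = of_int k" using z(1) by (auto elim: Ints_cases)
        have "wrap D j (y1 + t) = 0" using True \<open>L > 0\<close> unfolding wrap_def y1_def L_def k by simp
        then have "(i, y1) \<in> Z" unfolding Z_def using jt[of y1] y1 j by auto
        then show False using ab y1 unfolding avoids_def by blast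
      qed
      have "g (i, y) = (j, y + (t - L * \<lfloor>(a + t) / L\<rfloor>))" if "a \<le> y" "y < b" for y
        using jt[OF that] same_floor[OF that] True by (simp add: wrap_def L_def)
      then show ?thesis using j by blast
    qed
  qed
  then show thesis by (rule that)
qed

lemma IET_mapsI:
  assumes "bij_betw g (pts D) (pts D)" "\<And>p. p \<notin> pts D \<Longrightarrow> g p = p" "translation_cuts D g B"
  shows "g \<in> IET_maps D"
proof -
  have "\<exists>j t. j < ncomp D \<and> (\<forall>y. a \<le> y \<and> y < b \<longrightarrow> g (i, y) = (j, wrap D j (y + t)))"
    if ab: "cell D i a b" "avoids B i a b" for i a b
  proof -
    obtain j t where j: "j < ncomp D" and jt: "\<And>y. a \<le> y \<Longrightarrow> y < b \<Longrightarrow> g (i, y) = (j, y + t)"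
      using translation_cutsD[OF assms(3) ab] by blast
    have "g (i, y) = (j, wrap D j (y + t))" if "a \<le> y" "y < b" for y
    proof -
      have "g (i, y) \<in> pts D" using bij_betwE[OF assms(1)] cell_pts[OF ab(1) that] by blast
      then show ?thesis using jt[OF that] by (simp add: pts_def wrap_eq_self)
    qed
    then show ?thesis using j by blast
  qed
  moreover have "finite B" using assms(3) unfolding translation_cuts_def by blast
  ultimately show ?thesis using assms(1,2) unfolding IET_maps_iff by (intro conjI exI[of _ B]) auto
qed

section \<open>Inverses of interval exchanges\<close>

lemma bij_betw_if_preserves:
  assumes "bij h" "\<And>p. h p \<in> A \<longleftrightarrow> p \<in> A"
  shows "bij_betw h A A"
proof -
  have "p \<in> h ` A" if "p \<in> A" for p
  proof -
    have "h (inv_into UNIV h p) = p" using assms(1) by (simp add: bij_is_surj surj_f_inv_f)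
    then show ?thesis using assms(2)[of "inv_into UNIV h p"] that by (metis imageI)
  qed
  then have "h ` A = A" using assms(2) by blast
  then show ?thesis
    using inj_on_subset[OF bij_is_inj[OF assms(1)] subset_UNIV] unfolding bij_betw_def by blast
qed

lemma finite_cuts_near:
  assumes "finite B"
  obtains e :: real where "e > 0" "\<And>w. w \<noteq> y \<Longrightarrow> \<bar>w - y\<bar> < e \<Longrightarrow> (i, w) \<notin> B"
proof -
  define W where "W = {w. (i, w) \<in> B \<and> w \<noteq> y}"
  have "W \<subseteq> snd ` B" unfolding W_def by force
  then have "finite W" using assms finite_subset by blast
  show thesis
  proof (cases "W = {}")
    case True
    then show thesis using that[of 1] unfolding W_def by auto
  next
    case False
    let ?e = "Min ((\<lambda>w. \<bar>w - y\<bar>) ` W)"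
    have "?e > 0" using \<open>finite W\<close> False by (subst Min_gr_iff) (auto simp: W_def)
    moreover have "(i, w) \<notin> B" if "w \<noteq> y" "\<bar>w - y\<bar> < ?e" for w
    proof
      assume "(i, w) \<in> B"
      then have "w \<in> W" using that(1) unfolding W_def by simp
      then have "?e \<le> \<bar>w - y\<bar>" using \<open>finite W\<close> by simp
      then show False using that(2) by simp
    qed
    ultimately show thesis by (rule that)
  qed
qed

lemma inv_into_translation:
  fixes g :: "nat \<times> real \<Rightarrow> nat \<times> real"
  assumes "inj g" "\<And>w. u \<le> w \<Longrightarrow> w < v \<Longrightarrow> g (i, w) = (j, w + t)" "u + t \<le> w'" "w' < v + t"
  shows "inv_into UNIV g (j, w') = (i, w' - t)"
proof -
  have "u \<le> w' - t" "w' - t < v" using assms(3,4) by linarith+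
  then have "g (i, w' - t) = (j, w')" using assms(2)[of "w' - t"] by simp
  then show ?thesis using inv_into_f_f[OF assms(1), of "(i, w' - t)"] by simp
qed

lemma inv_translation_near:
  assumes g: "g \<in> IET_maps D" and Bg: "translation_cuts D g Bg" and gy: "g (i, y) = (j, z)"
    and "0 \<le> d" "0 < e" "cell D i (y - d) (y + e)" "avoids Bg i (y - d) (y + e)"
    and "z - d \<le> z'" "z' < z + e"
  shows "inv_into UNIV g (j, z') = (i, y + z' - z)"
proof -
  obtain j' t where tr: "\<And>w. y - d \<le> w \<Longrightarrow> w < y + e \<Longrightarrow> g (i, w) = (j', w + t)"
    using translation_cutsD[OF Bg assms(6,7)] by blast
  have "(j', y + t) = (j, z)" using tr[of y] assms(4,5) gy by simp
  then have "j' = j" "t = z - y" by auto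
  have "inv_into UNIV g (j, z') = (i, z' - t)"
    by (rule inv_into_translation[where u = "y - d" and v = "y + e",
          OF bij_is_inj[OF IET_maps_bij[OF g]] tr[unfolded \<open>j' = j\<close>]])
      (insert assms(8,9) \<open>t = z - y\<close>, linarith)+
  then show ?thesis using \<open>t = z - y\<close> by simp
qed

lemma inv_translation_cuts:
  assumes g: "g \<in> IET_maps D" and Bg: "translation_cuts D g Bg"
  shows "translation_cuts D (inv_into UNIV g) (g ` (Bg \<union> (\<lambda>i. (i, 0)) ` {..<ncomp D}))"
    (is "translation_cuts D ?g' ?B")
proof -
  have "finite Bg" using Bg unfolding translation_cuts_def by blast
  have "\<exists>i t. i < ncomp D \<and> (\<forall>z. a \<le> z \<and> z < b \<longrightarrow> ?g' (j, z) = (i, z + t))"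
    if ab: "cell D j a b" "avoids ?B j a b" for j a b
  proof -
    txt \<open>The component and the translation amount of \<open>g\<^sup>-\<^sup>1\<close> at \<open>z\<close> are locally constant on
      \<open>[a, b)\<close> (only to the right at \<open>z = a\<close>, whose preimage may be a cut of \<open>g\<close>), hence
      constant by connectedness.\<close>
    define \<phi> where "\<phi> z = (fst (?g' (j, z)), snd (?g' (j, z)) - z)" for z
    have "eventually (\<lambda>z'. \<phi> z = \<phi> z') (at z within {a..<b})" if z: "a \<le> z" "z < b" for z
    proof -
      obtain i y where iy: "?g' (j, z) = (i, y)" by fastforce
      have "(i, y) \<in> pts D" using IET_maps_inv_pts_iff[OF g] cell_pts[OF ab(1) z] iy by metis
      then have i: "i < ncomp D" "0 \<le> y" "y < len D i" by (simp_all add: pts_def)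
      have gy: "g (i, y) = (j, z)"
        using iy bij_is_surj[OF IET_maps_bij[OF g]] by (metis surj_f_inv_f)
      obtain e1 where e1: "e1 > 0" "\<And>w. w \<noteq> y \<Longrightarrow> \<bar>w - y\<bar> < e1 \<Longrightarrow> (i, w) \<notin> Bg"
        using finite_cuts_near[OF \<open>finite Bg\<close>] by blast
      have interior: "(i, y) \<notin> Bg \<and> 0 < y" if "z \<noteq> a"
      proof -
        have "(j, z) \<notin> ?B" using ab(2) z that unfolding avoids_def by auto
        then show ?thesis using gy i(1,2) by force
      qed
      define d where "d = (if z = a then 0 else min e1 y)"
      define e where "e = min e1 (len D i - y)"
      have de: "0 \<le> d" "0 < e" using e1 i interior unfolding d_def e_def by auto
      have cell: "cell D i (y - d) (y + e)"
        using de i unfolding cell_def d_def e_def by auto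
      have avoid: "avoids Bg i (y - d) (y + e)"
        unfolding avoids_def
      proof (intro allI impI notI)
        fix w assume w: "y - d < w \<and> w < y + e" and "(i, w) \<in> Bg"
        have "d \<le> e1" "e \<le> e1" using e1(1) unfolding d_def e_def by auto
        then have "\<bar>w - y\<bar> < e1" using w by (simp add: abs_less_iff)
        then have "w = y" using e1(2) \<open>(i, w) \<in> Bg\<close> by blast
        then have "z \<noteq> a" using w unfolding d_def by auto
        then show False using interior \<open>(i, w) \<in> Bg\<close> \<open>w = y\<close> by blast
      qed
      show ?thesis unfolding eventually_at
      proof (intro exI[of _ "if z = a then e else min d e"] conjI ballI impI)
        show "0 < (if z = a then e else min d e)" using de interior e1 unfolding d_def by auto
        fix z' assume "z' \<in> {a..<b}" "z' \<noteq> z \<and> dist z' z < (if z = a then e else min d e)"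
        then have "z - d \<le> z'" "z' < z + e"
          unfolding d_def dist_real_def by (auto split: if_splits)
        then show "\<phi> z = \<phi> z'"
          using inv_translation_near[OF g Bg gy de cell avoid] iy unfolding \<phi>_def by simp
      qed
    qed
    then have const: "\<phi> z = \<phi> a" if "a \<le> z" "z < b" for z
      using connected_local_const[OF connected_Ico, of a a b z \<phi>] that ab(1)
      unfolding cell_def by auto
    obtain i0 y0 where iy0: "?g' (j, a) = (i0, y0)" by fastforce
    have "(i0, y0) \<in> pts D"
      using IET_maps_inv_pts_iff[OF g, of "(j, a)"] cell_pts[OF ab(1), of a] iy0 ab(1)
      unfolding cell_def by auto
    then have "i0 < ncomp D" by (simp add: pts_def)
    moreover have "?g' (j, z) = (i0, z + (y0 - a))" if "a \<le> z" "z < b" for z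
      using const[OF that] iy0 unfolding \<phi>_def by (cases "?g' (j, z)") auto
    ultimately show ?thesis by blast
  qed
  then show ?thesis using \<open>finite Bg\<close> unfolding translation_cuts_def by auto
qed

lemma IET_maps_inv:
  assumes g: "g \<in> IET_maps D"
  shows "inv_into UNIV g \<in> IET_maps D"
proof -
  obtain Bg where "translation_cuts D g Bg" using IET_maps_translation_cuts[OF g] .
  moreover have "inv_into UNIV g p = p" if "p \<notin> pts D" for p
    using inv_into_f_f[OF bij_is_inj[OF IET_maps_bij[OF g]], of p] IET_maps_fixes[OF g that] by simp
  moreover have "bij_betw (inv_into UNIV g) (pts D) (pts D)"
    using bij_betw_if_preserves[OF bij_imp_bij_inv[OF IET_maps_bij[OF g]]] IET_maps_inv_pts_iff[OF g]
    by blast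
  ultimately show ?thesis using IET_mapsI inv_translation_cuts[OF g] by blast
qed

lemma translation_cuts_comp_step:
  assumes g: "g \<in> IET_maps D" and Bg: "translation_cuts D g Bg" and Bf: "step_cuts D f Bf"
    and ab: "cell D i a b" "avoids (Bg \<union> g -` Bf) i a b"
  obtains j t where "j < ncomp D" "\<And>y. a \<le> y \<Longrightarrow> y < b \<Longrightarrow> g (i, y) = (j, y + t)"
    "\<And>y. a \<le> y \<Longrightarrow> y < b \<Longrightarrow> f (g (i, y)) = f (g (i, a))"
proof -
  obtain j t where j: "j < ncomp D" and tr: "\<And>y. a \<le> y \<Longrightarrow> y < b \<Longrightarrow> g (i, y) = (j, y + t)"
    using translation_cutsD[OF Bg ab(1) avoids_mono[OF ab(2)]] by blast
  have inside: "0 \<le> y + t \<and> y + t < len D j" if "a \<le> y" "y < b" for y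
  proof -
    have "g (i, y) \<in> pts D" using IET_maps_pts_iff[OF g] cell_pts[OF ab(1) that] by blast
    then show ?thesis using tr[OF that] by (simp add: pts_def)
  qed
  have "b + t \<le> len D j"
  proof (rule dense_le)
    fix x assume "x < b + t"
    show "x \<le> len D j"
    proof (cases "a \<le> x - t")
      case True
      then show ?thesis using inside[of "x - t"] \<open>x < b + t\<close> by auto
    next
      case False
      then show ?thesis using inside[of a] ab(1) unfolding cell_def by auto
    qed
  qed
  then have cell: "cell D j (a + t) (b + t)"
    using inside[of a] j ab(1) unfolding cell_def by auto
  have "avoids Bf j (a + t) (b + t)"
    unfolding avoids_def
  proof (intro allI impI notI)
    fix w assume "a + t < w \<and> w < b + t" "(j, w) \<in> Bf"
    then have "(i, w - t) \<in> g -` Bf" using tr[of "w - t"] by auto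
    moreover have "a < w - t" "w - t < b" using \<open>a + t < w \<and> w < b + t\<close> by linarith+
    ultimately show False using ab(2) unfolding avoids_def by blast
  qed
  then have "f (g (i, y)) = f (g (i, a))" if "a \<le> y" "y < b" for y
    using step_cutsD[OF Bf cell, of "y + t"] tr that by auto
  then show thesis using that j tr by blast
qed

lemma step_function_comp:
  assumes g: "g \<in> IET_maps D" and f: "step_function D f"
  shows "step_function D (f \<circ> g)"
proof -
  obtain Bg where Bg: "translation_cuts D g Bg" using IET_maps_translation_cuts[OF g] .
  obtain Bf where Bf: "step_cuts D f Bf" using f unfolding step_function_def by blast
  have "finite (Bg \<union> g -` Bf)"
    using Bg Bf bij_is_inj[OF IET_maps_bij[OF g]]
    unfolding translation_cuts_def step_cuts_def by (simp add: finite_vimageI)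
  moreover have "(f \<circ> g) (i, y) = (f \<circ> g) (i, a)"
    if "cell D i a b" "avoids (Bg \<union> g -` Bf) i a b" "a \<le> y" "y < b" for i a b y
    using translation_cuts_comp_step[OF g Bg Bf that(1,2)] that(3,4) by (metis comp_apply)
  ultimately show ?thesis unfolding step_function_def step_cuts_def by blast
qed

lemma step_function_act:
  "g \<in> IET_maps D \<Longrightarrow> step_function D f \<Longrightarrow> step_function D (act g f)"
  unfolding act_def by (rule step_function_comp[OF IET_maps_inv])

lemma step_function_map2:
  assumes "step_function D f" "step_function D h"
  shows "step_function D (\<lambda>p. F (f p) (h p))"
proof -
  obtain B1 B2 where B1: "step_cuts D f B1" and B2: "step_cuts D h B2"
    using assms unfolding step_function_def by blast
  have "F (f (i, y)) (h (i, y)) = F (f (i, a)) (h (i, a))"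
    if "cell D i a b" "avoids (B1 \<union> B2) i a b" "a \<le> y" "y < b" for i a b y
    using step_cutsD[OF B1 that(1) _ that(3,4)] step_cutsD[OF B2 that(1) _ that(3,4)]
      avoids_mono[OF that(2)] by simp
  moreover have "finite (B1 \<union> B2)" using B1 B2 unfolding step_cuts_def by simp
  ultimately show ?thesis unfolding step_function_def step_cuts_def by blast
qed

lemma step_function_const: "step_function D (\<lambda>_. c)"
  unfolding step_function_def step_cuts_def by blast

lemma subdomain_subset_pts: "subdomain D J \<Longrightarrow> J \<subseteq> pts D"
  unfolding subdomain_def pts_def by fastforce

lemma step_function_ind_on:
  assumes "subdomain D J"
  shows "step_function D (ind_on J c)"
proof -
  obtain S where S: "finite S" and J: "J = (\<Union>(k, \<alpha>, \<beta>) \<in> S. {(k, x) | x. \<alpha> \<le> x \<and> x < \<beta>})"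
    using assms unfolding subdomain_def by blast
  define B where "B = (\<lambda>(k, \<alpha>, \<beta>). (k, \<alpha>)) ` S \<union> (\<lambda>(k, \<alpha>, \<beta>). (k, \<beta>)) ` S"
  have "finite B" unfolding B_def using S by simp
  have same: "(i, y) \<in> J \<longleftrightarrow> (i, a) \<in> J" if "avoids B i a b" "a \<le> y" "y < b" for i a b y
  proof -
    have "\<alpha> \<le> y \<and> y < \<beta> \<longleftrightarrow> \<alpha> \<le> a \<and> a < \<beta>" if "(i, \<alpha>, \<beta>) \<in> S" for \<alpha> \<beta>
    proof -
      have "(i, \<alpha>) \<in> B" "(i, \<beta>) \<in> B"
        unfolding B_def using that by (simp_all add: image_iff Bex_def) blast+
      then have "\<not> (a < \<alpha> \<and> \<alpha> < b)" "\<not> (a < \<beta> \<and> \<beta> < b)"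
        using \<open>avoids B i a b\<close> unfolding avoids_def by blast+
      then show ?thesis using \<open>a \<le> y\<close> \<open>y < b\<close> by linarith
    qed
    then show ?thesis unfolding J by blast
  qed
  show ?thesis unfolding step_function_def step_cuts_def
  proof (intro exI[of _ B] conjI allI impI)
    fix i a b y assume "cell D i a b \<and> avoids B i a b" "a \<le> y \<and> y < b"
    then show "ind_on J c (i, y) = ind_on J c (i, a)"
      using same[of i a b y] unfolding ind_on_def by simp
  qed (rule \<open>finite B\<close>)
qed

lemma Fun_grp_vanishes: "f \<in> Fun_grp D \<Longrightarrow> p \<notin> pts D \<Longrightarrow> f p = 0"
  unfolding Fun_grp_def by blast

lemma act_Fun_grp:
  assumes "g \<in> IET_maps D" "f \<in> Fun_grp D"
  shows "act g f \<in> Fun_grp D"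
proof -
  have "f (inv_into UNIV g p) = 0" if "p \<notin> pts D" for p
    using Fun_grp_vanishes[OF assms(2)] IET_maps_inv_pts_iff[OF assms(1)] that by blast
  then show ?thesis unfolding Fun_grp_def act_def by simp
qed

lemma F_J_step_functions:
  assumes "G \<subseteq> IET_maps D" "subdomain D J"
  shows "(F_J D G J :: (nat \<times> real \<Rightarrow> 'a::ab_group_add) set) \<subseteq> {f \<in> Fun_grp D. step_function D f}"
  unfolding F_J_def
proof (rule Inter_lower, rule CollectI, intro conjI ballI allI)
  let ?S = "{f \<in> Fun_grp D. step_function D f} :: (nat \<times> real \<Rightarrow> 'a) set"
  show "?S \<subseteq> Fun_grp D" by blast
  show "(\<lambda>_. 0) \<in> ?S"
    by (simp add: Fun_grp_def step_function_const)
  show "(\<lambda>p. f p + h p) \<in> ?S" if "f \<in> ?S" "h \<in> ?S" for f h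
    using that step_function_map2[where F = "(+)"] by (auto simp: Fun_grp_def)
  show "(\<lambda>p. - f p) \<in> ?S" if "f \<in> ?S" for f
    using that step_function_map2[where F = "\<lambda>x _. - x"] by (auto simp: Fun_grp_def)
  show "act g f \<in> ?S" if "g \<in> G" "f \<in> ?S" for g f
    using that assms(1) act_Fun_grp step_function_act by blast
  show "ind_on J c \<in> ?S" for c
    using step_function_ind_on[OF assms(2)] subdomain_subset_pts[OF assms(2)]
    by (auto simp: Fun_grp_def ind_on_def)
qed

lemma semidirect_carrierD:
  assumes "G \<subseteq> IET_maps D" "subdomain D J" "(f, g) \<in> carrier (semidirect D G J)"
  shows "f \<in> Fun_grp D" "step_function D f" "g \<in> IET_maps D"
  using assms F_J_step_functions[OF assms(1,2)] by (auto simp: semidirect_def)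

definition skew_product :: "('b \<Rightarrow> 'a::plus) \<Rightarrow> ('b \<Rightarrow> 'b) \<Rightarrow> 'b \<times> 'a \<Rightarrow> 'b \<times> 'a" where
  "skew_product f g = (\<lambda>(q, c). (g q, c + f (g q)))"

lemma skew_product_comp:
  fixes f f' :: "'b \<Rightarrow> 'a::ab_semigroup_add"
  assumes "inj g"
  shows "skew_product f g \<circ> skew_product f' g' =
    skew_product (\<lambda>p. f p + f' (inv_into UNIV g p)) (g \<circ> g')"
  using assms by (auto simp: skew_product_def add_ac)

lemma skew_product_bij_betw:
  fixes f :: "'b \<Rightarrow> 'a::group_add"
  assumes "bij_betw g A A"
  shows "bij_betw (skew_product f g) (A \<times> UNIV) (A \<times> UNIV)"
proof (rule bij_betw_byWitness[where f' = "\<lambda>(q, c). (inv_into A g q, c - f q)"])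
  show "\<forall>x\<in>A \<times> UNIV. (\<lambda>(q, c). (inv_into A g q, c - f q)) (skew_product f g x) = x"
    using bij_betw_inv_into_left[OF assms] by (auto simp: skew_product_def)
  show "\<forall>x\<in>A \<times> UNIV. skew_product f g ((\<lambda>(q, c). (inv_into A g q, c - f q)) x) = x"
    using bij_betw_inv_into_right[OF assms] by (auto simp: skew_product_def)
  show "skew_product f g ` (A \<times> UNIV) \<subseteq> A \<times> UNIV"
    using bij_betwE[OF assms] by (auto simp: skew_product_def)
  show "(\<lambda>(q, c). (inv_into A g q, c - f q)) ` (A \<times> UNIV) \<subseteq> A \<times> UNIV"
    using bij_betwE[OF bij_betw_inv_into[OF assms]] by auto
qed

section \<open>Stacking coloured copies of the domain into the unit interval\<close>

lemma sum_lessThan_mono: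
  fixes L :: "nat \<Rightarrow> real"
  assumes "\<And>k. k < N \<Longrightarrow> 0 \<le> L k" "k \<le> k'" "k' \<le> N"
  shows "sum L {..<k} \<le> sum L {..<k'}"
  by (rule sum_mono2) (use assms in auto)

lemma partial_sums_block_unique:
  fixes L :: "nat \<Rightarrow> real"
  assumes L: "\<And>k. k < N \<Longrightarrow> 0 \<le> L k" and "k < N" "k' < N"
    and "0 \<le> y" "y < L k" "0 \<le> y'" "y' < L k'"
    and eq: "sum L {..<k} + y = sum L {..<k'} + y'"
  shows "k = k' \<and> y = y'"
proof -
  have before: "sum L {..<k1} + y1 < sum L {..<k2} + y2"
    if "k1 < k2" "y1 < L k1" "k2 < N" "0 \<le> y2" for k1 k2 y1 y2
  proof -
    have "sum L {..<Suc k1} \<le> sum L {..<k2}"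
      by (rule sum_lessThan_mono[where N = N]) (use L that in auto)
    then show ?thesis using that by simp
  qed
  have "k = k'"
    using before[of k k' y y'] before[of k' k y' y] assms(2-7) eq by (cases k k' rule: linorder_cases) auto
  then show ?thesis using eq by simp
qed

lemma partial_sums_block_exists:
  fixes L :: "nat \<Rightarrow> real"
  assumes "0 \<le> x" "x < sum L {..<N}"
  obtains k where "k < N" "sum L {..<k} \<le> x" "x < sum L {..<Suc k}"
  using assms(2)
proof (induction N)
  case 0
  then show ?case using assms(1) by simp
next
  case (Suc N)
  show ?case
  proof (cases "x < sum L {..<N}")
    case True
    then show ?thesis using Suc.IH Suc.prems(1) by (meson less_SucI)
  next
    case False
    show ?thesis by (rule Suc.prems(1)[of N]) (use False Suc.prems(2) in auto)
  qed
qed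

lemma pts_unit_interval: "(i, x) \<in> pts unit_interval \<longleftrightarrow> i = 0 \<and> 0 \<le> x \<and> x < 1"
  by (auto simp: pts_def unit_interval_def)

locale colour_stacking =
  fixes D :: domain and m :: nat and idx :: "'a::ab_group_add \<Rightarrow> nat"
  assumes domain: "is_domain D" and idx: "bij_betw idx UNIV {..<m}"
begin

definition block_start :: "nat \<Rightarrow> real" where
  "block_start k = (\<Sum>k'<k. len D (k' div m))"

definition stack_len :: real where
  "stack_len = block_start (ncomp D * m)"

text \<open>Block \<open>i * m + idx c\<close>, of length \<open>len D i\<close>, holds the copy of component \<open>i\<close> with colour
  \<open>c\<close>; the blocks are laid end to end and rescaled to \<open>[0, 1)\<close>.\<close>

definition encode :: "(nat \<times> real) \<times> 'a \<Rightarrow> nat \<times> real" where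
  "encode = (\<lambda>((i, y), c). (0, (block_start (i * m + idx c) + y) / stack_len))"

definition embed :: "(nat \<times> real \<Rightarrow> 'a) \<Rightarrow> (nat \<times> real \<Rightarrow> nat \<times> real) \<Rightarrow> nat \<times> real \<Rightarrow> nat \<times> real" where
  "embed f g p = (if p \<in> pts unit_interval
     then encode (skew_product f g (inv_into (pts D \<times> UNIV) encode p)) else p)"

lemma idx_less: "idx c < m"
  using idx by (auto simp: bij_betw_def)

lemma m_pos: "0 < m"
  using idx_less[of 0] by simp

lemma block_index_less:
  assumes "i < ncomp D"
  shows "i * m + idx c < ncomp D * m"
proof -
  have "i * m + idx c < Suc i * m" using idx_less[of c] by simp
  also have "\<dots> \<le> ncomp D * m" using assms by (intro mult_le_mono1) simp
  finally show ?thesis .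
qed

lemma block_index_div: "(i * m + idx c) div m = i"
  and block_index_mod: "(i * m + idx c) mod m = idx c"
  using idx_less[of c] by simp_all

lemma block_index_surj:
  assumes "k < ncomp D * m"
  obtains i c where "i < ncomp D" "k = i * m + idx c"
proof -
  have "k mod m < m" using m_pos by simp
  then obtain c where "idx c = k mod m" using idx unfolding bij_betw_def by (metis imageE lessThan_iff)
  moreover have "k div m < ncomp D" using assms by (simp add: less_mult_imp_div_less)
  ultimately show thesis using that[of "k div m" c] by simp
qed

lemma block_len_pos: "k < ncomp D * m \<Longrightarrow> 0 < len D (k div m)"
  using domain less_mult_imp_div_less unfolding is_domain_def by blast

lemma block_start_Suc: "block_start (Suc (i * m + idx c)) = block_start (i * m + idx c) + len D i"
  by (simp add: block_start_def block_index_div)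

lemma block_start_le_stack_len: "k \<le> ncomp D * m \<Longrightarrow> block_start k \<le> stack_len"
  unfolding stack_len_def block_start_def
  by (rule sum_lessThan_mono[where N = "ncomp D * m"]) (use block_len_pos in \<open>auto intro: less_imp_le\<close>)

lemma stack_len_pos: "0 < stack_len"
proof -
  have "0 < ncomp D * m" using domain m_pos unfolding is_domain_def by simp
  then have "block_start 1 \<le> stack_len" using block_start_le_stack_len by simp
  moreover have "0 < block_start 1" using block_len_pos[of 0] \<open>0 < ncomp D * m\<close> by (simp add: block_start_def)
  ultimately show ?thesis by simp
qed

lemma encode_shift: "encode ((i, y + s), c) = (0, snd (encode ((i, y), c)) + s / stack_len)"
  by (simp add: encode_def add_divide_distrib)

lemma block_start_add_less:
  "(i, y) \<in> pts D \<Longrightarrow> block_start (i * m + idx c) + y < block_start (Suc (i * m + idx c))"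
  by (simp add: pts_def block_start_Suc)

lemma encode_inj: "inj_on encode (pts D \<times> UNIV)"
proof (rule inj_onI)
  fix x x' assume x: "x \<in> pts D \<times> UNIV" "x' \<in> pts D \<times> UNIV" and eq: "encode x = encode x'"
  obtain i y c i' y' c' where xs: "x = ((i, y), c)" "x' = ((i', y'), c')" by (metis prod.exhaust)
  let ?k = "i * m + idx c" and ?k' = "i' * m + idx c'"
  have p: "i < ncomp D" "0 \<le> y" "y < len D i" "i' < ncomp D" "0 \<le> y'" "y' < len D i'"
    using x xs by (auto simp: pts_def)
  have "block_start ?k + y = block_start ?k' + y'"
    using eq xs stack_len_pos by (simp add: encode_def)
  then have "?k = ?k' \<and> y = y'"
    unfolding block_start_def
    by (intro partial_sums_block_unique[where N = "ncomp D * m" and L = "\<lambda>k. len D (k div m)"])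
      (use p block_len_pos block_index_less in \<open>auto simp: block_index_div less_imp_le\<close>)
  then have k: "?k = ?k'" and "y = y'" by auto
  have "i = i'" using arg_cong[OF k, of "\<lambda>k. k div m"] by (simp add: block_index_div)
  moreover have "idx c = idx c'" using arg_cong[OF k, of "\<lambda>k. k mod m"] by (simp add: block_index_mod idx_less)
  then have "c = c'" using idx unfolding bij_betw_def inj_on_def by blast
  ultimately show "x = x'" using xs \<open>y = y'\<close> by simp
qed

lemma encode_pts:
  assumes p: "(i, y) \<in> pts D"
  shows "encode ((i, y), c) \<in> pts unit_interval"
proof -
  let ?k = "i * m + idx c"
  have "block_start (Suc ?k) \<le> stack_len"
    using block_index_less[of i c] p by (intro block_start_le_stack_len) (simp add: pts_def)
  then have "block_start ?k + y < stack_len" using block_start_add_less[OF p, of c] by linarith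
  moreover have "0 \<le> block_start ?k"
    unfolding block_start_def using block_len_pos block_index_less[of i c] p
    by (intro sum_nonneg) (auto simp: pts_def intro: less_imp_le)
  moreover have "0 \<le> y" using p by (simp add: pts_def)
  ultimately show ?thesis
    using stack_len_pos by (simp add: encode_def pts_unit_interval)
qed

lemma encode_surj:
  assumes "p \<in> pts unit_interval"
  obtains i y c where "(i, y) \<in> pts D" "p = encode ((i, y), c)"
proof -
  obtain x where p: "p = (0, x)" "0 \<le> x" "x < 1"
    using assms by (cases p) (auto simp: pts_unit_interval)
  then have "0 \<le> x * stack_len" "x * stack_len < block_start (ncomp D * m)"
    using stack_len_pos by (auto simp: stack_len_def)
  then obtain k where k: "k < ncomp D * m" "block_start k \<le> x * stack_len"
    "x * stack_len < block_start (Suc k)"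
    unfolding block_start_def by (rule partial_sums_block_exists)
  obtain i c where i: "i < ncomp D" "k = i * m + idx c" using block_index_surj[OF k(1)] by blast
  define y where "y = x * stack_len - block_start k"
  have "(i, y) \<in> pts D" using k i unfolding y_def by (simp add: pts_def block_start_Suc)
  moreover have "p = encode ((i, y), c)"
    using p stack_len_pos i unfolding y_def by (simp add: encode_def)
  ultimately show thesis by (rule that)
qed

lemma encode_bij: "bij_betw encode (pts D \<times> UNIV) (pts unit_interval)"
  unfolding bij_betw_def
proof (intro conjI encode_inj subset_antisym subsetI)
  show "p \<in> pts unit_interval" if "p \<in> encode ` (pts D \<times> UNIV)" for p
    using that encode_pts by auto
  show "p \<in> encode ` (pts D \<times> UNIV)" if "p \<in> pts unit_interval" for p
    using encode_surj[OF that] by blast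
qed

lemma finite_colours: "finite (UNIV :: 'a set)"
  using bij_betw_finite[OF idx] by simp

lemma encode_unit_cell:
  assumes ab: "cell unit_interval 0 a b"
    and avoid: "avoids ((\<lambda>k. (0, block_start k / stack_len)) ` {..ncomp D * m}) 0 a b"
  obtains i y c where "encode ((i, y), c) = (0, a)" "cell D i y (y + (b - a) * stack_len)"
proof -
  have "0 \<le> a" "a < 1" using ab by (auto simp: cell_def unit_interval_def)
  then have "(0, a) \<in> pts unit_interval" by (simp add: pts_unit_interval)
  then obtain i y c where p: "(i, y) \<in> pts D" and a: "(0, a) = encode ((i, y), c)"
    by (rule encode_surj)
  let ?k = "i * m + idx c"
  have a_eq: "a * stack_len = block_start ?k + y"
    using a stack_len_pos by (simp add: encode_def)
  have "a * stack_len < block_start (Suc ?k)" using a_eq block_start_add_less[OF p] by simp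
  then have a_less: "a < block_start (Suc ?k) / stack_len" using stack_len_pos by (simp add: field_simps)
  have "Suc ?k \<le> ncomp D * m" using block_index_less[of i c] p by (simp add: pts_def)
  then have "\<not> (a < block_start (Suc ?k) / stack_len \<and> block_start (Suc ?k) / stack_len < b)"
    using avoid unfolding avoids_def by blast
  then have "b * stack_len \<le> block_start (Suc ?k)"
    using a_less stack_len_pos by (simp add: field_simps)
  then have "y + (b - a) * stack_len \<le> len D i"
    using a_eq block_start_Suc[of i c] by (simp add: left_diff_distrib)
  moreover have "0 < (b - a) * stack_len" using ab stack_len_pos by (simp add: cell_def)
  ultimately have "cell D i y (y + (b - a) * stack_len)" using p by (simp add: cell_def pts_def)
  then show thesis using that a by simp
qed

lemma embed_encode:
  assumes "x \<in> pts D \<times> UNIV"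
  shows "embed f g (encode x) = encode (skew_product f g x)"
proof -
  have "encode x \<in> pts unit_interval" using bij_betwE[OF encode_bij] assms by blast
  then show ?thesis using bij_betw_inv_into_left[OF encode_bij assms] by (simp add: embed_def)
qed

lemma embed_outside: "p \<notin> pts unit_interval \<Longrightarrow> embed f g p = p"
  by (simp add: embed_def)

lemma embed_translation_cuts:
  assumes g: "g \<in> IET_maps D" and f: "step_function D f"
  obtains B where "translation_cuts unit_interval (embed f g) B"
proof -
  obtain Bg where Bg: "translation_cuts D g Bg" using IET_maps_translation_cuts[OF g] .
  obtain Bf where Bf: "step_cuts D f Bf" using f unfolding step_function_def by blast
  define S where "S = Bg \<union> g -` Bf"
  define ends where "ends = (\<lambda>k. (0::nat, block_start k / stack_len)) ` {..ncomp D * m}"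
  have "finite S"
    using Bg Bf bij_is_inj[OF IET_maps_bij[OF g]] unfolding S_def translation_cuts_def step_cuts_def
    by (simp add: finite_vimageI)
  then have fin: "finite (encode ` (S \<times> UNIV) \<union> ends)"
    using finite_colours unfolding ends_def by simp
  have "\<exists>j t. j < ncomp unit_interval \<and> (\<forall>x. a \<le> x \<and> x < b \<longrightarrow> embed f g (i', x) = (j, x + t))"
    if ab: "cell unit_interval i' a b" "avoids (encode ` (S \<times> UNIV) \<union> ends) i' a b" for i' a b
  proof -
    have i': "i' = 0" using ab(1) by (simp add: cell_def unit_interval_def)
    obtain i y c where a: "encode ((i, y), c) = (0, a)" and cell: "cell D i y (y + (b - a) * stack_len)"
      using encode_unit_cell ab avoids_mono unfolding i' ends_def by blast
    have enc: "encode ((i, y + s), c) = (0, a + s / stack_len)" for s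
      using encode_shift[of i y s c] a by simp
    have "avoids S i y (y + (b - a) * stack_len)"
      unfolding avoids_def
    proof (intro allI impI notI)
      fix w assume w: "y < w \<and> w < y + (b - a) * stack_len" "(i, w) \<in> S"
      then have "encode ((i, y + (w - y)), c) \<in> encode ` (S \<times> UNIV) \<union> ends" by simp
      then have "(0, a + (w - y) / stack_len) \<in> encode ` (S \<times> UNIV) \<union> ends" unfolding enc .
      moreover have "a < a + (w - y) / stack_len" "a + (w - y) / stack_len < b"
        using w(1) stack_len_pos by (simp_all add: field_simps)
      ultimately show False using ab(2) unfolding avoids_def i' by blast
    qed
    then obtain j t where "j < ncomp D"
      and tr: "\<And>w. y \<le> w \<Longrightarrow> w < y + (b - a) * stack_len \<Longrightarrow> g (i, w) = (j, w + t)"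
      and const: "\<And>w. y \<le> w \<Longrightarrow> w < y + (b - a) * stack_len \<Longrightarrow> f (g (i, w)) = f (g (i, y))"
      using translation_cuts_comp_step[OF g Bg Bf cell] unfolding S_def by blast
    define c' where "c' = c + f (g (i, y))"
    have "embed f g (0, x) = (0, x + (snd (encode ((j, y + t), c')) - a))" if x: "a \<le> x" "x < b" for x
    proof -
      define w where "w = y + (x - a) * stack_len"
      have w: "y \<le> w" "w < y + (b - a) * stack_len"
        using x stack_len_pos unfolding w_def by (simp_all add: mult_right_mono)
      have "(0, x) = encode ((i, w), c)" using enc[of "(x - a) * stack_len"] stack_len_pos unfolding w_def by simp
      then have "embed f g (0, x) = encode ((j, (y + t) + (x - a) * stack_len), c')"
        using embed_encode[of "((i, w), c)" f g] cell_pts[OF cell w] tr[OF w] const[OF w]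
        unfolding skew_product_def c'_def w_def by (simp add: algebra_simps)
      then show ?thesis using stack_len_pos by (simp add: encode_shift)
    qed
    then show ?thesis unfolding i' by (auto simp: unit_interval_def)
  qed
  then have "translation_cuts unit_interval (embed f g) (encode ` (S \<times> UNIV) \<union> ends)"
    using fin unfolding translation_cuts_def by blast
  then show thesis by (rule that)
qed

lemma embed_bij_betw:
  assumes "bij_betw g (pts D) (pts D)"
  shows "bij_betw (embed f g) (pts unit_interval) (pts unit_interval)"
proof -
  have "bij_betw (encode \<circ> (skew_product f g \<circ> inv_into (pts D \<times> UNIV) encode))
      (pts unit_interval) (pts unit_interval)"
    using bij_betw_trans[OF bij_betw_trans[OF bij_betw_inv_into[OF encode_bij]
          skew_product_bij_betw[where f = f, OF assms]] encode_bij] .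
  then show ?thesis by (rule bij_betw_cong[THEN iffD1, rotated]) (simp add: embed_def)
qed

lemma embed_IET:
  assumes "g \<in> IET_maps D" "step_function D f"
  shows "embed f g \<in> IET_maps unit_interval"
proof -
  obtain B where "translation_cuts unit_interval (embed f g) B"
    using embed_translation_cuts[OF assms] .
  then show ?thesis
    using IET_mapsI embed_bij_betw[OF IET_maps_bij_betw[OF assms(1)]] embed_outside by blast
qed

lemma embed_mult:
  assumes g: "g \<in> IET_maps D" and g': "g' \<in> IET_maps D"
  shows "embed (\<lambda>p. f p + act g f' p) (g \<circ> g') = embed f g \<circ> embed f' g'"
proof
  fix p
  show "embed (\<lambda>p. f p + act g f' p) (g \<circ> g') p = (embed f g \<circ> embed f' g') p"
  proof (cases "p \<in> pts unit_interval")
    case True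
    then obtain x where x: "x \<in> pts D \<times> UNIV" "p = encode x"
      using bij_betw_imp_surj_on[OF encode_bij] by blast
    have x': "skew_product f' g' x \<in> pts D \<times> UNIV"
      using bij_betw_apply[OF skew_product_bij_betw[OF IET_maps_bij_betw[OF g']] x(1)] .
    have "embed (\<lambda>p. f p + act g f' p) (g \<circ> g') p
        = encode (skew_product (\<lambda>p. f p + f' (inv_into UNIV g p)) (g \<circ> g') x)"
      using embed_encode[OF x(1)] unfolding x(2) act_def by simp
    also have "\<dots> = encode (skew_product f g (skew_product f' g' x))"
      using fun_cong[OF skew_product_comp[OF bij_is_inj[OF IET_maps_bij[OF g]], of f f' g'], of x]
      by simp
    also have "\<dots> = (embed f g \<circ> embed f' g') p"
      using embed_encode[OF x(1)] embed_encode[OF x'] unfolding x(2) by simp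
    finally show ?thesis .
  next
    case False
    then show ?thesis by (simp add: embed_outside)
  qed
qed

lemma embed_inj:
  assumes g: "g \<in> IET_maps D" and g': "g' \<in> IET_maps D"
    and f: "f \<in> Fun_grp D" and f': "f' \<in> Fun_grp D"
    and eq: "embed f g = embed f' g'"
  shows "f = f' \<and> g = g'"
proof -
  have same: "g q = g' q \<and> f (g q) = f' (g' q)" if q: "q \<in> pts D" for q
  proof -
    have x: "(q, 0) \<in> pts D \<times> UNIV" using q by simp
    have "encode (skew_product f g (q, 0)) = encode (skew_product f' g' (q, 0))"
      using eq embed_encode[OF x] by metis
    then have "skew_product f g (q, 0) = skew_product f' g' (q, 0)"
      using inj_onD[OF encode_inj] bij_betw_apply[OF skew_product_bij_betw[OF IET_maps_bij_betw[OF g]] x]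
        bij_betw_apply[OF skew_product_bij_betw[OF IET_maps_bij_betw[OF g']] x] by blast
    then show ?thesis by (auto simp: skew_product_def)
  qed
  have "g = g'"
  proof
    fix q show "g q = g' q"
      using same IET_maps_fixes[OF g] IET_maps_fixes[OF g'] by (cases "q \<in> pts D") auto
  qed
  moreover have "f = f'"
  proof
    fix p show "f p = f' p"
    proof (cases "p \<in> pts D")
      case True
      then obtain q where "q \<in> pts D" "p = g q"
        using bij_betw_imp_surj_on[OF IET_maps_bij_betw[OF g]] by blast
      moreover have "f (g q) = f' (g q)" using same[OF \<open>q \<in> pts D\<close>] by auto
      ultimately show ?thesis by simp
    next
      case False
      then show ?thesis using Fun_grp_vanishes[OF f] Fun_grp_vanishes[OF f'] by simp
    qed
  qed
  ultimately show ?thesis by simp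
qed

lemma embed_hom:
  assumes "G \<subseteq> IET_maps D" "subdomain D J"
  shows "(\<lambda>(f, g). embed f g) \<in> hom (semidirect D G J) IET"
proof (rule homI)
  fix x :: "(nat \<times> real \<Rightarrow> 'a) \<times> (nat \<times> real \<Rightarrow> nat \<times> real)" assume x: "x \<in> carrier (semidirect D G J)"
  obtain f g where xfg: "x = (f, g)" by fastforce
  then have "embed f g \<in> IET_maps unit_interval"
    using semidirect_carrierD[OF assms] x by (intro embed_IET) simp_all
  then show "(\<lambda>(f, g). embed f g) x \<in> carrier IET" using xfg by (simp add: IET_def IET_group_def)
next
  fix x y :: "(nat \<times> real \<Rightarrow> 'a) \<times> (nat \<times> real \<Rightarrow> nat \<times> real)"
  assume x: "x \<in> carrier (semidirect D G J)" and y: "y \<in> carrier (semidirect D G J)"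
  obtain f g f' g' where xy: "x = (f, g)" "y = (f', g')" by fastforce
  then have "g \<in> IET_maps D" "g' \<in> IET_maps D" using semidirect_carrierD[OF assms] x y by simp_all
  then show "(\<lambda>(f, g). embed f g) (x \<otimes>\<^bsub>semidirect D G J\<^esub> y)
      = (\<lambda>(f, g). embed f g) x \<otimes>\<^bsub>IET\<^esub> (\<lambda>(f, g). embed f g) y"
    using embed_mult unfolding xy by (simp add: semidirect_def IET_def IET_group_def)
qed

lemma embed_inj_on:
  assumes "G \<subseteq> IET_maps D" "subdomain D J"
  shows "inj_on (\<lambda>(f, g). embed f g) (carrier (semidirect D G J))"
proof (rule inj_onI)
  fix x y :: "(nat \<times> real \<Rightarrow> 'a) \<times> (nat \<times> real \<Rightarrow> nat \<times> real)"
  assume x: "x \<in> carrier (semidirect D G J)" and y: "y \<in> carrier (semidirect D G J)"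
    and eq: "(\<lambda>(f, g). embed f g) x = (\<lambda>(f, g). embed f g) y"
  obtain f g f' g' where xy: "x = (f, g)" "y = (f', g')" by fastforce
  have "f = f' \<and> g = g'"
    using semidirect_carrierD[OF assms] x y eq unfolding xy by (intro embed_inj) simp_all
  then show "x = y" unfolding xy by simp
qed

end

theorem mainTheorem19:
  fixes D :: domain
    and G :: "((nat \<times> real) \<Rightarrow> (nat \<times> real)) set"
    and J :: "(nat \<times> real) set"
  assumes "is_domain D"
    and "subgroup G (IET_group D)"
    and "subdomain D J"
  shows "\<exists>h. h \<in> hom (semidirect D G J :: (((nat \<times> real) \<Rightarrow> 'a::{ab_group_add, finite}) \<times> _) monoid) IET
             \<and> inj_on h (carrier (semidirect D G J :: (((nat \<times> real) \<Rightarrow> 'a) \<times> _) monoid))"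
proof -
  obtain idx :: "'a \<Rightarrow> nat" where "bij_betw idx UNIV {..<card (UNIV :: 'a set)}"
    using ex_bij_betw_finite_nat[of "UNIV :: 'a set"] by (auto simp: atLeast0LessThan)
  then interpret colour_stacking D "card (UNIV :: 'a set)" idx using assms(1) by unfold_locales
  have "G \<subseteq> IET_maps D" using subgroup.subset[OF assms(2)] by (simp add: IET_group_def)
  then show ?thesis using embed_hom embed_inj_on assms(3) by blast
qed

end
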